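(* Let $d\in\mathbb{N}$, $\mathbf{s}=(s_1,\dots,s_d)\in\mathbb{N}^d$, and let each $l_j(n)$ ($1\le j\le d$) be one of $2n$, $2n+1$, $2n-1$. Then \[ \sum_{n_0>n_1\succ n_2\succ\cdots\succ n_d\succ0}\frac{a_{n_0}}{(2n_0-1)\,l_1(n_1)^{s_1}\cdots l_d(n_d)^{s_d}}=\sum_{n_1\succ n_2\succ\cdots\succ n_d\succ0}\frac{a_{n_1}}{l_1(n_1)^{s_1}\cdots l_d(n_d)^{s_d}}, \] where each $\succ$ can be either $\ge$ or $>$ (the same choices on both sides), provided the series is defined.
   Context: $a_0=1$ and $a_n=\frac{1}{4^n}\binom{2n}{n}$ for $n\ge1$; summation indices are nonnegative integers. *)

theory Defs
  imports "HOL-Analysis.Analysis"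
begin

definition acoef :: "nat \<Rightarrow> real" where
  "acoef n = (if n = 0 then 1 else real ((2*n) choose n) / 4 ^ n)"

definition succ_rel :: "bool \<Rightarrow> nat \<Rightarrow> nat \<Rightarrow> bool" where
  "succ_rel b x y = (if b then y < x else y \<le> x)"

definition lfun :: "int \<Rightarrow> nat \<Rightarrow> real" where
  "lfun c n = 2 * real n + of_int c"

text \<open>Index tuples (n_1,...,n_d) as functions nat \<Rightarrow> nat that vanish outside {1..d}, with
  n_1 \<succ> n_2 \<succ> ... \<succ> n_d \<succ> 0 (n_{d+1} = 0 by the support condition).\<close>
definition chain_tuples :: "nat \<Rightarrow> (nat \<Rightarrow> bool) \<Rightarrow> (nat \<Rightarrow> nat) set" where
  "chain_tuples d st = {n. (\<forall>i. (i = 0 \<or> d < i) \<longrightarrow> n i = 0) \<and>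
                            (\<forall>j\<in>{1..d}. succ_rel (st j) (n j) (n (Suc j)))}"

end

theory Submission
  imports Defs "HOL-Real_Asymp.Real_Asymp"
begin

text \<open>The recurrence \<open>a (m + 1) = a m * (2m + 1) / (2m + 2)\<close> gives the telescoping identity
  \<open>a m / (2m - 1) = a (m - 1) - a m\<close> for \<open>m \<ge> 1\<close>, and \<open>a m ^ 2 \<le> 1 / (2m + 1)\<close> forces
  \<open>a m\<close> to tend to 0; hence the sum over \<open>n\<^sub>0 > n\<^sub>1\<close> collapses to \<open>a n\<^sub>1\<close>. These inner terms are
  nonnegative, so the double series converges absolutely as soon as the right-hand side does,
  and it may be summed iteratively.\<close>

lemma acoef_fact: "acoef n = fact (2 * n) / (fact n ^ 2 * 4 ^ n)"
  by (simp add: acoef_def binomial_fact power2_eq_square)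

lemma acoef_nonneg: "acoef n \<ge> 0"
  by (simp add: acoef_fact)

lemma acoef_Suc: "acoef (Suc n) = acoef n * (2 * real n + 1) / (2 * real n + 2)"
proof -
  have "fact (2 * Suc n) = (2 * real n + 2) * (2 * real n + 1) * fact (2 * n)"
    by (simp add: algebra_simps)
  then show ?thesis
    unfolding acoef_fact by (simp add: divide_simps) (simp add: algebra_simps power2_eq_square)
qed

lemma decseq_acoef: "decseq acoef"
proof (rule decseq_SucI)
  fix n
  have "acoef n * ((2 * real n + 1) / (2 * real n + 2)) \<le> acoef n"
    by (rule mult_left_le) (simp_all add: acoef_nonneg)
  then show "acoef (Suc n) \<le> acoef n"
    by (simp add: acoef_Suc)
qed

lemma acoef_diff_Suc: "acoef n - acoef (Suc n) = acoef (Suc n) / (2 * real n + 1)"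
proof -
  have "acoef n - acoef (Suc n) = acoef n / (2 * real n + 2)"
    by (simp add: acoef_Suc field_simps)
  also have "\<dots> = acoef (Suc n) / (2 * real n + 1)"
    by (simp add: acoef_Suc add_pos_pos)
  finally show ?thesis .
qed

lemma acoef_square_le: "acoef n ^ 2 \<le> 1 / (2 * real n + 1)"
proof (induction n)
  case 0
  then show ?case by (simp add: acoef_def)
next
  case (Suc n)
  have "acoef (Suc n) ^ 2 = acoef n ^ 2 * ((2 * real n + 1) / (2 * real n + 2)) ^ 2"
    by (simp add: acoef_Suc power_mult_distrib power_divide)
  also have "\<dots> \<le> 1 / (2 * real n + 1) * ((2 * real n + 1) / (2 * real n + 2)) ^ 2"
    by (rule mult_right_mono[OF Suc.IH]) simp
  also have "\<dots> = (2 * real n + 1) / (2 * real n + 2) ^ 2"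
    by (simp add: power2_eq_square)
  also have "\<dots> \<le> 1 / (2 * real (Suc n) + 1)"
    by (simp add: divide_simps) (simp add: algebra_simps power2_eq_square)
  finally show ?case .
qed

lemma acoef_tendsto_zero: "acoef \<longlonglongrightarrow> 0"
proof -
  have "(\<lambda>n. acoef n ^ 2) \<longlonglongrightarrow> 0"
  proof (rule tendsto_sandwich[OF _ _ tendsto_const])
    show "\<forall>\<^sub>F n in sequentially. acoef n ^ 2 \<le> 1 / (2 * real n + 1)"
      using acoef_square_le by simp
    show "(\<lambda>n. 1 / (2 * real n + 1)) \<longlonglongrightarrow> 0"
      by real_asymp
  qed simp
  then have "(\<lambda>n. sqrt (acoef n ^ 2)) \<longlonglongrightarrow> sqrt 0"
    by (rule tendsto_real_sqrt)
  then show ?thesis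
    by (simp add: acoef_nonneg)
qed

lemma has_sum_telescope_greaterThan:
  fixes f :: "nat \<Rightarrow> real"
  assumes "f \<longlonglongrightarrow> 0" and "decseq f"
  shows "((\<lambda>m. f (m - 1) - f m) has_sum f N) {N<..}"
proof -
  have "(\<lambda>k. f (k + N) - f (Suc k + N)) sums f N"
    using telescope_sums'[OF LIMSEQ_ignore_initial_segment[OF assms(1)]] by simp
  then have "((\<lambda>k. f (k + N) - f (Suc k + N)) has_sum f N) UNIV"
    by (rule sums_nonneg_imp_has_sum) (use assms(2) in \<open>simp add: decseq_Suc_iff\<close>)
  also have "?this \<longleftrightarrow> ?thesis"
    by (intro has_sum_reindex_bij_witness[of _ "\<lambda>m. m - Suc N" "\<lambda>k. Suc k + N"]) auto
  finally show ?thesis .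
qed

lemma has_sum_acoef_div_greaterThan:
  "((\<lambda>m. acoef m / (2 * real m - 1)) has_sum acoef N) {N<..}"
proof -
  have "((\<lambda>m. acoef (m - 1) - acoef m) has_sum acoef N) {N<..}"
    by (rule has_sum_telescope_greaterThan[OF acoef_tendsto_zero decseq_acoef])
  also have "?this \<longleftrightarrow> ?thesis"
  proof (rule has_sum_cong)
    fix m :: nat
    assume "m \<in> {N<..}"
    then show "acoef (m - 1) - acoef m = acoef m / (2 * real m - 1)"
      using acoef_diff_Suc[of "m - 1"] by (simp add: of_nat_diff)
  qed
  finally show ?thesis .
qed

lemma has_sum_Sigma_mult_nonneg:
  fixes h :: "'b \<Rightarrow> real" and w :: "'a \<Rightarrow> real"
  assumes inner: "\<And>x. x \<in> A \<Longrightarrow> (h has_sum H x) (B x)"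
    and nonneg: "\<And>x y. x \<in> A \<Longrightarrow> y \<in> B x \<Longrightarrow> h y \<ge> 0"
    and outer: "(\<lambda>x. H x * w x) summable_on A"
  shows "((\<lambda>(x, y). h y * w x) has_sum (\<Sum>\<^sub>\<infinity>x\<in>A. H x * w x)) (Sigma A B)"
proof -
  have inner_norm: "((\<lambda>y. norm (h y * w x)) has_sum norm (H x * w x)) (B x)" if "x \<in> A" for x
  proof -
    have "H x \<ge> 0"
      using has_sum_nonneg[OF inner[OF that]] nonneg[OF that] by blast
    then have norm_H: "norm (H x * w x) = H x * \<bar>w x\<bar>"
      by (simp add: abs_mult)
    have norm_h: "norm (h y * w x) = h y * \<bar>w x\<bar>" if "y \<in> B x" for y
      using nonneg[OF \<open>x \<in> A\<close> that] by (simp add: abs_mult)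
    have "((\<lambda>y. h y * \<bar>w x\<bar>) has_sum H x * \<bar>w x\<bar>) (B x)"
      by (rule has_sum_cmult_left[OF inner[OF that]])
    also have "?this \<longleftrightarrow> ((\<lambda>y. norm (h y * w x)) has_sum H x * \<bar>w x\<bar>) (B x)"
      by (rule has_sum_cong) (rule norm_h[symmetric])
    finally show ?thesis
      unfolding norm_H .
  qed
  have "(\<lambda>z. norm ((\<lambda>(x, y). h y * w x) z)) summable_on Sigma A B"
  proof (rule summable_on_SigmaI)
    show "((\<lambda>y. norm ((\<lambda>(x, y). h y * w x) (x, y))) has_sum norm (H x * w x)) (B x)"
      if "x \<in> A" for x
      using inner_norm[OF that] by simp
    show "(\<lambda>x. norm (H x * w x)) summable_on A"
      by (rule summable_on_iff_abs_summable_on_real[THEN iffD1, OF outer])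
  qed (rule norm_ge_zero)
  then have summable: "(\<lambda>(x, y). h y * w x) summable_on Sigma A B"
    by (rule abs_summable_summable)
  show ?thesis
  proof (rule has_sum_SigmaI[OF _ has_sum_infsum[OF outer] summable])
    fix x
    assume "x \<in> A"
    show "((\<lambda>y. (\<lambda>(x, y). h y * w x) (x, y)) has_sum H x * w x) (B x)"
      using has_sum_cmult_left[OF inner[OF \<open>x \<in> A\<close>]] by simp
  qed
qed

theorem theorem5p2:
  fixes d :: nat and s :: "nat \<Rightarrow> nat" and c :: "nat \<Rightarrow> int" and st :: "nat \<Rightarrow> bool"
  assumes "d \<ge> 1"
    and "\<forall>j\<in>{1..d}. c j \<in> {-1, 0, 1}"
    and "\<forall>n\<in>chain_tuples d st. \<forall>j\<in>{1..d}. lfun (c j) (n j) \<noteq> 0"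
    and "(\<lambda>n. acoef (n 1) / (\<Prod>j\<in>{1..d}. lfun (c j) (n j) ^ s j)) summable_on chain_tuples d st"
  shows "((\<lambda>(m, n). acoef m / ((2 * real m - 1) * (\<Prod>j\<in>{1..d}. lfun (c j) (n j) ^ s j)))
           has_sum (\<Sum>\<^sub>\<infinity>n\<in>chain_tuples d st. acoef (n 1) / (\<Prod>j\<in>{1..d}. lfun (c j) (n j) ^ s j)))
         {(m, n). n \<in> chain_tuples d st \<and> n 1 < m}"
proof -
  let ?P = "\<lambda>n. \<Prod>j\<in>{1..d}. lfun (c j) (n j) ^ s j"
  let ?C = "chain_tuples d st"
  have "((\<lambda>(n, m). acoef m / (2 * real m - 1) * (1 / ?P n))
          has_sum (\<Sum>\<^sub>\<infinity>n\<in>?C. acoef (n 1) * (1 / ?P n))) (Sigma ?C (\<lambda>n. {n 1<..}))"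
  proof (rule has_sum_Sigma_mult_nonneg)
    show "((\<lambda>m. acoef m / (2 * real m - 1)) has_sum acoef (n 1)) {n 1<..}" for n :: "nat \<Rightarrow> nat"
      by (rule has_sum_acoef_div_greaterThan)
    show "acoef m / (2 * real m - 1) \<ge> 0" if "m \<in> {n 1<..}" for n :: "nat \<Rightarrow> nat" and m
      using that acoef_nonneg[of m] by simp
    show "(\<lambda>n. acoef (n 1) * (1 / ?P n)) summable_on ?C"
      using assms(4) by simp
  qed
  also have "?this \<longleftrightarrow> ?thesis"
    by (intro has_sum_reindex_bij_witness[of _ prod.swap prod.swap]) auto
  finally show ?thesis .
qed

end
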